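(* Let $(M,\mathcal F,D,g)$ be a foliated Hessian structure of codimension $q$. The normal Hessian sectional curvature of $(M,\mathcal F,D,g)$ is constant and equal to $c$ if and only if for any adapted foliated affine coordinate system $(x^1,\dots,x^p,y^1,\dots,y^q)$, $$Q_{ijkl}=\frac c2\{g_{ij}g_{kl}+g_{il}g_{jk}\}\quad\text{for all } i,j,k,l=1,\dots,q.$$
   Context: $N(M,\mathcal F)=TM/T\mathcal F$. Foliated Hessian structure $(D,g)$: $D$ a flat torsion-free foliated connection in the normal bundle (adapted foliated affine coordinates: adapted charts with affine transverse coordinate changes and $\overline{\partial/\partial y^i}$ $D$-parallel), $g$ a foliated metric in the normal bundle with locally $g_{ij}=\partial^2h/\partial y^i\partial y^j$, $h$ a function of $y$ only. $\nabla$ normal Levi-Civita connection of $g$, $\gamma=\nabla-D$, normal Hessian curvature $Q=D\gamma$ with $Q^i_{jkl}=\partial\gamma^i_{jl}/\partial y^k$, indices lowered/raised by $g$. $\hat Q$ is the endomorphism of the bundle of symmetric contravariant normal 2-tensors given by $\hat Q(\xi)^{ik}=Q^i{}_j{}^k{}_l\xi^{jl}$. The normal Hessian sectional curvature is $q(\xi)=\langle\hat Q(\xi),\xi\rangle/\langle\xi,\xi\rangle$ for nonzero such $\xi$, $\langle\,,\rangle$ the inner product induced by $g$; it is constant equal to $c$ if $q\equiv c$. *)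

theory Defs
  imports "HOL-Analysis.Analysis"
begin

text \<open>Local (chart-level) model of a foliated Hessian structure of codimension q.
  The transverse affine coordinates y = (y^1,...,y^q) of an adapted foliated affine
  chart range over an open set U of real^'q (CARD('q) = q); the metric is
  g_ij = d^2 h / dy^i dy^j with h a smooth function of y only. In such coordinates
  the flat connection D has vanishing Christoffel symbols, so gamma = nabla - D has
  the Christoffel symbols of the Levi-Civita connection of g as components.\<close>

definition pd :: "'q::finite \<Rightarrow> (real^'q \<Rightarrow> real) \<Rightarrow> real^'q \<Rightarrow> real" where
  "pd i f y = deriv (\<lambda>t. f (y + t *\<^sub>R axis i 1)) 0"

fun pdl :: "'q::finite list \<Rightarrow> (real^'q \<Rightarrow> real) \<Rightarrow> real^'q \<Rightarrow> real" where
  "pdl [] f = f"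
| "pdl (i # is) f = pd i (pdl is f)"

definition smooth_on :: "(real^'q::finite) set \<Rightarrow> (real^'q \<Rightarrow> real) \<Rightarrow> bool" where
  "smooth_on U f \<longleftrightarrow> (\<forall>is. continuous_on U (pdl is f) \<and>
     (\<forall>i. \<forall>y\<in>U. (\<lambda>t. pdl is f (y + t *\<^sub>R axis i 1)) differentiable (at 0)))"

definition hess_metric :: "(real^'q::finite \<Rightarrow> real) \<Rightarrow> real^'q \<Rightarrow> 'q \<Rightarrow> 'q \<Rightarrow> real" where
  "hess_metric h y i j = pd i (pd j h) y"

definition metric_inv :: "(real^'q::finite \<Rightarrow> real) \<Rightarrow> real^'q \<Rightarrow> 'q \<Rightarrow> 'q \<Rightarrow> real" where
  "metric_inv h y i j = matrix_inv (\<chi> a b. hess_metric h y a b) $ i $ j"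

definition christoffel :: "(real^'q::finite \<Rightarrow> real) \<Rightarrow> real^'q \<Rightarrow> 'q \<Rightarrow> 'q \<Rightarrow> 'q \<Rightarrow> real" where
  "christoffel h y i j k = (1/2) * (\<Sum>l\<in>UNIV. metric_inv h y i l *
     (pd j (\<lambda>z. hess_metric h z l k) y + pd k (\<lambda>z. hess_metric h z l j) y
      - pd l (\<lambda>z. hess_metric h z j k) y))"

text \<open>Difference tensor gamma = nabla - D; D has zero Christoffel symbols in affine coordinates.\<close>
definition hess_gamma :: "(real^'q::finite \<Rightarrow> real) \<Rightarrow> real^'q \<Rightarrow> 'q \<Rightarrow> 'q \<Rightarrow> 'q \<Rightarrow> real" where
  "hess_gamma h y i j k = christoffel h y i j k - 0"

definition hessQ :: "(real^'q::finite \<Rightarrow> real) \<Rightarrow> real^'q \<Rightarrow> 'q \<Rightarrow> 'q \<Rightarrow> 'q \<Rightarrow> 'q \<Rightarrow> real" where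
  "hessQ h y i j k l = pd k (\<lambda>z. hess_gamma h z i j l) y"

definition hessQ_low :: "(real^'q::finite \<Rightarrow> real) \<Rightarrow> real^'q \<Rightarrow> 'q \<Rightarrow> 'q \<Rightarrow> 'q \<Rightarrow> 'q \<Rightarrow> real" where
  "hessQ_low h y i j k l = (\<Sum>m\<in>UNIV. hess_metric h y i m * hessQ h y m j k l)"

definition hessQ_mixed :: "(real^'q::finite \<Rightarrow> real) \<Rightarrow> real^'q \<Rightarrow> 'q \<Rightarrow> 'q \<Rightarrow> 'q \<Rightarrow> 'q \<Rightarrow> real" where
  "hessQ_mixed h y i j k l = (\<Sum>m\<in>UNIV. metric_inv h y k m * hessQ h y i j m l)"

definition sym2 :: "('q \<Rightarrow> 'q \<Rightarrow> real) \<Rightarrow> bool" where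
  "sym2 \<xi> \<longleftrightarrow> (\<forall>i k. \<xi> i k = \<xi> k i)"

definition hatQ :: "(real^'q::finite \<Rightarrow> real) \<Rightarrow> real^'q \<Rightarrow> ('q \<Rightarrow> 'q \<Rightarrow> real) \<Rightarrow> 'q \<Rightarrow> 'q \<Rightarrow> real" where
  "hatQ h y \<xi> i k = (\<Sum>j\<in>UNIV. \<Sum>l\<in>UNIV. hessQ_mixed h y i j k l * \<xi> j l)"

definition tens_inner :: "(real^'q::finite \<Rightarrow> real) \<Rightarrow> real^'q \<Rightarrow> ('q \<Rightarrow> 'q \<Rightarrow> real) \<Rightarrow> ('q \<Rightarrow> 'q \<Rightarrow> real) \<Rightarrow> real" where
  "tens_inner h y \<xi> \<eta> = (\<Sum>i\<in>UNIV. \<Sum>j\<in>UNIV. \<Sum>k\<in>UNIV. \<Sum>l\<in>UNIV.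
      hess_metric h y i j * hess_metric h y k l * \<xi> i k * \<eta> j l)"

definition hess_sectional :: "(real^'q::finite \<Rightarrow> real) \<Rightarrow> real^'q \<Rightarrow> ('q \<Rightarrow> 'q \<Rightarrow> real) \<Rightarrow> real" where
  "hess_sectional h y \<xi> = tens_inner h y (hatQ h y \<xi>) \<xi> / tens_inner h y \<xi> \<xi>"

definition hessian_potential :: "(real^'q::finite) set \<Rightarrow> (real^'q \<Rightarrow> real) \<Rightarrow> bool" where
  "hessian_potential U h \<longleftrightarrow> smooth_on U h \<and>
     (\<forall>y\<in>U. \<forall>v::real^'q. v \<noteq> 0 \<longrightarrow>
        (\<Sum>i\<in>UNIV. \<Sum>j\<in>UNIV. hess_metric h y i j * v $ i * v $ j) > 0)"

end

theory Submission
  imports Defs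
begin

text \<open>In adapted affine coordinates \<open>g\<^sub>i\<^sub>j = h\<^sub>i\<^sub>j\<close>, the difference tensor is
  \<open>\<gamma>\<^sup>m\<^sub>j\<^sub>l = 1/2 g\<^sup>m\<^sup>n h\<^sub>n\<^sub>j\<^sub>l\<close>, and lowering an index of its derivative gives
  \<open>Q\<^sub>i\<^sub>j\<^sub>k\<^sub>l = 1/2 h\<^sub>k\<^sub>i\<^sub>j\<^sub>l - 1/2 h\<^sub>k\<^sub>i\<^sub>m g\<^sup>m\<^sup>n h\<^sub>n\<^sub>j\<^sub>l\<close>.
  By the symmetry of iterated partial derivatives, \<open>Q\<close> is invariant under \<open>i \<leftrightarrow> k\<close>, \<open>j \<leftrightarrow> l\<close>
  and \<open>(i,j,k,l) \<mapsto> (j,i,l,k)\<close>, and so is \<open>C\<^sub>i\<^sub>j\<^sub>k\<^sub>l = c/2 (g\<^sub>i\<^sub>j g\<^sub>k\<^sub>l + g\<^sub>i\<^sub>l g\<^sub>j\<^sub>k)\<close>.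
  Now \<open>\<langle>hatQ \<xi>, \<xi>\<rangle> = Q\<^sub>i\<^sub>j\<^sub>k\<^sub>l \<xi>\<^sup>j\<^sup>l \<xi>\<^sup>i\<^sup>k\<close> and, for symmetric \<open>\<xi>\<close>,
  \<open>c \<langle>\<xi>, \<xi>\<rangle> = C\<^sub>i\<^sub>j\<^sub>k\<^sub>l \<xi>\<^sup>j\<^sup>l \<xi>\<^sup>i\<^sup>k\<close>, where \<open>\<langle>\<xi>, \<xi>\<rangle> > 0\<close> for \<open>\<xi> \<noteq> 0\<close> because \<open>g\<close> is
  a sum of squares of linear forms. So \<open>q \<equiv> c\<close> says that the quadratic forms of \<open>Q\<close> and \<open>C\<close>
  agree on symmetric tensors, and polarization at \<open>e\<^sub>p\<^sub>q + e\<^sub>r\<^sub>s\<close> (with \<open>e\<^sub>p\<^sub>q\<close> the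
  symmetrized unit tensor) recovers every component: \<open>Q = C\<close>.\<close>

section \<open>Partial derivatives along coordinate lines\<close>

definition pd_differentiable :: "(real^'q::finite \<Rightarrow> real) \<Rightarrow> real^'q \<Rightarrow> 'q \<Rightarrow> bool" where
  "pd_differentiable F y k \<longleftrightarrow> (\<lambda>t. F (y + t *\<^sub>R axis k 1)) differentiable (at 0)"

lemma has_real_derivative_pd:
  assumes "pd_differentiable F y k"
  shows "((\<lambda>t. F (y + t *\<^sub>R axis k 1)) has_real_derivative pd k F y) (at 0)"
  using assms unfolding pd_differentiable_def pd_def
  by (simp add: DERIV_deriv_iff_real_differentiable)

lemma pd_of_has_real_derivative:
  assumes "((\<lambda>t. F (y + t *\<^sub>R axis k 1)) has_real_derivative D) (at 0)"
  shows "pd_differentiable F y k" and "pd k F y = D"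
  using assms unfolding pd_differentiable_def pd_def
  by (auto simp: real_differentiable_def intro: DERIV_imp_deriv)

lemma pd_mult:
  assumes "pd_differentiable F y k" "pd_differentiable G y k"
  shows "pd k (\<lambda>z. F z * G z) y = pd k F y * G y + F y * pd k G y"
    and "pd_differentiable (\<lambda>z. F z * G z) y k"
  using pd_of_has_real_derivative[OF DERIV_mult[OF assms[THEN has_real_derivative_pd]]]
  by (simp_all add: algebra_simps)

lemma pd_sum:
  assumes "finite S" "\<And>a. a \<in> S \<Longrightarrow> pd_differentiable (F a) y k"
  shows "pd k (\<lambda>z. \<Sum>a\<in>S. F a z) y = (\<Sum>a\<in>S. pd k (F a) y)"
    and "pd_differentiable (\<lambda>z. \<Sum>a\<in>S. F a z) y k"
proof -
  have "((\<lambda>t. \<Sum>a\<in>S. F a (y + t *\<^sub>R axis k 1)) has_real_derivative (\<Sum>a\<in>S. pd k (F a) y)) (at 0)"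
    by (intro DERIV_sum has_real_derivative_pd assms(2))
  from pd_of_has_real_derivative[OF this] show "pd k (\<lambda>z. \<Sum>a\<in>S. F a z) y = (\<Sum>a\<in>S. pd k (F a) y)"
    and "pd_differentiable (\<lambda>z. \<Sum>a\<in>S. F a z) y k" by auto
qed

lemma pd_cmult:
  assumes "pd_differentiable F y k"
  shows "pd k (\<lambda>z. c * F z) y = c * pd k F y" and "pd_differentiable (\<lambda>z. c * F z) y k"
  using pd_of_has_real_derivative[OF DERIV_cmult[OF has_real_derivative_pd[OF assms]]] by auto

lemma eventually_line_in_open:
  fixes y :: "real^'q::finite"
  assumes "open U" "y \<in> U"
  shows "eventually (\<lambda>t. y + t *\<^sub>R axis k 1 \<in> U) (nhds (0::real))"
proof -
  have "open ((\<lambda>t::real. y + t *\<^sub>R axis k 1) -` U)"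
    by (intro open_vimage assms(1) continuous_intros)
  then show ?thesis
    using assms(2) eventually_nhds_in_open by fastforce
qed

lemma pd_cong_open:
  assumes "open U" "y \<in> U" "\<And>z. z \<in> U \<Longrightarrow> F z = G z"
  shows "pd k F y = pd k G y" and "pd_differentiable F y k \<longleftrightarrow> pd_differentiable G y k"
proof -
  have ev: "eventually (\<lambda>t. F (y + t *\<^sub>R axis k 1) = G (y + t *\<^sub>R axis k 1)) (nhds (0::real))"
    using eventually_line_in_open[OF assms(1,2)] by eventually_elim (use assms(3) in auto)
  show "pd k F y = pd k G y"
    unfolding pd_def by (rule deriv_cong_ev[OF ev refl])
  show "pd_differentiable F y k \<longleftrightarrow> pd_differentiable G y k"
    unfolding pd_differentiable_def DERIV_deriv_iff_real_differentiable[symmetric]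
    using DERIV_cong_ev[OF refl ev] deriv_cong_ev[OF ev refl] by auto
qed

lemma has_real_derivative_pd_line:
  assumes "pd_differentiable F (y + s *\<^sub>R axis k 1) k"
  shows "((\<lambda>t. F (y + t *\<^sub>R axis k 1)) has_real_derivative pd k F (y + s *\<^sub>R axis k 1)) (at s)"
proof -
  have "(\<lambda>t. F ((y + s *\<^sub>R axis k 1) + t *\<^sub>R axis k 1)) = (\<lambda>t. F (y + (t + s) *\<^sub>R axis k 1))"
    by (simp add: algebra_simps scaleR_add_left)
  then show ?thesis
    using has_real_derivative_pd[OF assms] DERIV_shift[of "\<lambda>t. F (y + t *\<^sub>R axis k 1)" _ 0 s] by simp
qed

lemma second_difference_mvt:
  fixes f :: "real^'q::finite \<Rightarrow> real"
  assumes ball: "ball y r \<subseteq> U" and s: "0 < s" "2 * s < r"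
    and d1: "\<And>z i. z \<in> U \<Longrightarrow> pd_differentiable f z i"
    and d2: "\<And>z i j. z \<in> U \<Longrightarrow> pd_differentiable (pd i f) z j"
  obtains \<sigma> \<tau> where "0 < \<sigma>" "\<sigma> < s" "0 < \<tau>" "\<tau> < s"
    "f ((y + s *\<^sub>R axis i 1) + s *\<^sub>R axis j 1) - f (y + s *\<^sub>R axis i 1) - f (y + s *\<^sub>R axis j 1) + f y
      = s * s * pd j (pd i f) ((y + \<sigma> *\<^sub>R axis i 1) + \<tau> *\<^sub>R axis j 1)"
proof -
  have mem: "(y + a *\<^sub>R axis k 1) + b *\<^sub>R axis l 1 \<in> U" if "\<bar>a\<bar> \<le> s" "\<bar>b\<bar> \<le> s" for a b k l
  proof -
    have "norm (a *\<^sub>R axis k (1::real) + b *\<^sub>R axis l 1) \<le> \<bar>a\<bar> + \<bar>b\<bar>"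
      using norm_triangle_ineq[of "a *\<^sub>R axis k (1::real)" "b *\<^sub>R axis l 1"] by simp
    then have "dist ((y + a *\<^sub>R axis k 1) + b *\<^sub>R axis l 1) y < r"
      using that s by (simp add: dist_norm)
    then show ?thesis using ball by (auto simp: dist_commute)
  qed
  have mem1: "y + a *\<^sub>R axis k 1 \<in> U" if "\<bar>a\<bar> \<le> s" for a k
    using mem[of a 0] that s by simp
  obtain \<sigma> where \<sigma>: "0 < \<sigma>" "\<sigma> < s" and first_mvt:
    "(f ((y + s *\<^sub>R axis j 1) + s *\<^sub>R axis i 1) - f (y + s *\<^sub>R axis i 1))
      - (f ((y + s *\<^sub>R axis j 1) + 0 *\<^sub>R axis i 1) - f (y + 0 *\<^sub>R axis i 1))
     = (s - 0) * (pd i f ((y + s *\<^sub>R axis j 1) + \<sigma> *\<^sub>R axis i 1) - pd i f (y + \<sigma> *\<^sub>R axis i 1))"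
  proof (rule exE[OF MVT2[OF s(1), of "\<lambda>t. f ((y + s *\<^sub>R axis j 1) + t *\<^sub>R axis i 1) - f (y + t *\<^sub>R axis i 1)"]])
    fix t assume "0 \<le> t" "t \<le> s"
    then show "((\<lambda>t. f ((y + s *\<^sub>R axis j 1) + t *\<^sub>R axis i 1) - f (y + t *\<^sub>R axis i 1)) has_real_derivative
      pd i f ((y + s *\<^sub>R axis j 1) + t *\<^sub>R axis i 1) - pd i f (y + t *\<^sub>R axis i 1)) (at t)"
      using s by (intro DERIV_diff has_real_derivative_pd_line d1 mem mem1) auto
  qed (use that in blast)
  obtain \<tau> where \<tau>: "0 < \<tau>" "\<tau> < s" and second_mvt:
    "pd i f ((y + \<sigma> *\<^sub>R axis i 1) + s *\<^sub>R axis j 1) - pd i f ((y + \<sigma> *\<^sub>R axis i 1) + 0 *\<^sub>R axis j 1)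
     = (s - 0) * pd j (pd i f) ((y + \<sigma> *\<^sub>R axis i 1) + \<tau> *\<^sub>R axis j 1)"
  proof (rule exE[OF MVT2[OF s(1), of "\<lambda>t. pd i f ((y + \<sigma> *\<^sub>R axis i 1) + t *\<^sub>R axis j 1)"]])
    fix t assume "0 \<le> t" "t \<le> s"
    then show "((\<lambda>t. pd i f ((y + \<sigma> *\<^sub>R axis i 1) + t *\<^sub>R axis j 1)) has_real_derivative
      pd j (pd i f) ((y + \<sigma> *\<^sub>R axis i 1) + t *\<^sub>R axis j 1)) (at t)"
      using s \<sigma> by (intro has_real_derivative_pd_line d2 mem) auto
  qed (use that in blast)
  have "(y + s *\<^sub>R axis j 1) + \<sigma> *\<^sub>R axis i 1 = (y + \<sigma> *\<^sub>R axis i 1) + s *\<^sub>R axis j (1::real)"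
    "(y + s *\<^sub>R axis i 1) + s *\<^sub>R axis j 1 = (y + s *\<^sub>R axis j 1) + s *\<^sub>R axis i (1::real)"
    by (simp_all add: algebra_simps)
  with first_mvt second_mvt show thesis
    using that[OF \<sigma> \<tau>] by (simp add: algebra_simps)
qed

lemma pd_commute:
  fixes f :: "real^'q::finite \<Rightarrow> real"
  assumes "open U" "y \<in> U"
    and d1: "\<And>z i. z \<in> U \<Longrightarrow> pd_differentiable f z i"
    and d2: "\<And>z i j. z \<in> U \<Longrightarrow> pd_differentiable (pd i f) z j"
    and cont: "\<And>i j. continuous_on U (pd j (pd i f))"
  shows "pd j (pd i f) y = pd i (pd j f) y"
proof (rule ccontr)
  let ?A = "pd j (pd i f)" and ?B = "pd i (pd j f)"
  assume "?A y \<noteq> ?B y"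
  define \<epsilon> where "\<epsilon> = \<bar>?A y - ?B y\<bar> / 2"
  have "\<epsilon> > 0" using \<open>?A y \<noteq> ?B y\<close> by (simp add: \<epsilon>_def)
  obtain r where r: "r > 0" "ball y r \<subseteq> U" using assms(1,2) open_contains_ball by blast
  have "isCont ?A y" "isCont ?B y"
    using cont assms(1,2) continuous_on_eq_continuous_at by blast+
  then obtain dA dB where dA: "dA > 0" "\<And>x. dist x y < dA \<Longrightarrow> dist (?A x) (?A y) < \<epsilon>"
    and dB: "dB > 0" "\<And>x. dist x y < dB \<Longrightarrow> dist (?B x) (?B y) < \<epsilon>"
    using \<open>\<epsilon> > 0\<close> unfolding continuous_at_eps_delta by blast
  define s where "s = min r (min dA dB) / 3"
  have s: "0 < s" "2 * s < r" "2 * s < dA" "2 * s < dB" using r dA dB by (auto simp: s_def)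
  obtain \<sigma> \<tau> where st: "0 < \<sigma>" "\<sigma> < s" "0 < \<tau>" "\<tau> < s" and A:
    "f ((y + s *\<^sub>R axis i 1) + s *\<^sub>R axis j 1) - f (y + s *\<^sub>R axis i 1) - f (y + s *\<^sub>R axis j 1) + f y
      = s * s * ?A ((y + \<sigma> *\<^sub>R axis i 1) + \<tau> *\<^sub>R axis j 1)"
    using second_difference_mvt[OF r(2) s(1,2) d1 d2] by blast
  obtain \<sigma>' \<tau>' where st': "0 < \<sigma>'" "\<sigma>' < s" "0 < \<tau>'" "\<tau>' < s" and B:
    "f ((y + s *\<^sub>R axis j 1) + s *\<^sub>R axis i 1) - f (y + s *\<^sub>R axis j 1) - f (y + s *\<^sub>R axis i 1) + f y
      = s * s * ?B ((y + \<sigma>' *\<^sub>R axis j 1) + \<tau>' *\<^sub>R axis i 1)"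
    using second_difference_mvt[OF r(2) s(1,2) d1 d2] by blast
  have corner: "(y + s *\<^sub>R axis j 1) + s *\<^sub>R axis i 1 = (y + s *\<^sub>R axis i 1) + s *\<^sub>R axis j (1::real)"
    by (simp add: algebra_simps)
  have "s * s * ?A ((y + \<sigma> *\<^sub>R axis i 1) + \<tau> *\<^sub>R axis j 1)
      = s * s * ?B ((y + \<sigma>' *\<^sub>R axis j 1) + \<tau>' *\<^sub>R axis i 1)"
    using A B[unfolded corner] by linarith
  with s(1) have AB: "?A ((y + \<sigma> *\<^sub>R axis i 1) + \<tau> *\<^sub>R axis j 1) = ?B ((y + \<sigma>' *\<^sub>R axis j 1) + \<tau>' *\<^sub>R axis i 1)"
    by simp
  have near: "dist ((y + a *\<^sub>R axis k 1) + b *\<^sub>R axis l 1) y < 2 * s" if "0 < a" "a < s" "0 < b" "b < s" for a b k l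
    using norm_triangle_ineq[of "a *\<^sub>R axis k (1::real)" "b *\<^sub>R axis l 1"] that by (simp add: dist_norm)
  have "dist ((y + \<sigma> *\<^sub>R axis i 1) + \<tau> *\<^sub>R axis j 1) y < dA"
    using near[OF st] s(3) by (meson less_trans)
  moreover have "dist ((y + \<sigma>' *\<^sub>R axis j 1) + \<tau>' *\<^sub>R axis i 1) y < dB"
    using near[OF st'] s(4) by (meson less_trans)
  ultimately have "\<bar>?A y - ?B y\<bar> < 2 * \<epsilon>"
    using dA(2) dB(2) AB by (fastforce simp: dist_real_def)
  then show False by (simp add: \<epsilon>_def)
qed

lemma smooth_on_pd_differentiable: "smooth_on U f \<Longrightarrow> z \<in> U \<Longrightarrow> pd_differentiable (pdl is f) z i"
  unfolding smooth_on_def pd_differentiable_def by blast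

lemma smooth_on_continuous_pdl: "smooth_on U f \<Longrightarrow> continuous_on U (pdl is f)"
  unfolding smooth_on_def by blast

lemma pdl_swap_head:
  assumes "open U" "smooth_on U f" "y \<in> U"
  shows "pdl (a # b # is) f y = pdl (b # a # is) f y"
  using pd_commute[OF assms(1,3), of "pdl is f" b a]
    smooth_on_pd_differentiable[OF assms(2)] smooth_on_continuous_pdl[OF assms(2), of "_ # _ # is"]
  by (metis pdl.simps(2))

lemma pdl_move_head:
  assumes "open U" "smooth_on U f" "y \<in> U"
  shows "pdl (a # us @ vs) f y = pdl (us @ a # vs) f y"
  using assms(3)
proof (induction us arbitrary: y)
  case (Cons u us)
  have "pdl (a # u # us @ vs) f y = pd u (pdl (a # us @ vs) f) y"
    using pdl_swap_head[OF assms(1,2) Cons.prems] by simp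
  also have "\<dots> = pd u (pdl (us @ a # vs) f) y"
    using pd_cong_open(1)[OF assms(1) Cons.prems] Cons.IH by blast
  finally show ?case by simp
qed simp

lemma pdl_mset_eq:
  assumes "open U" "smooth_on U f" "y \<in> U" "mset xs = mset ys"
  shows "pdl xs f y = pdl ys f y"
  using assms(3,4)
proof (induction xs arbitrary: ys y)
  case (Cons x xs)
  obtain us vs where ys: "ys = us @ x # vs"
    using Cons.prems(2) by (metis list.set_intros(1) set_mset_mset split_list)
  then have "mset xs = mset (us @ vs)" using Cons.prems(2) by simp
  then have "pdl xs f z = pdl (us @ vs) f z" if "z \<in> U" for z
    using Cons.IH that by blast
  then have "pdl (x # xs) f y = pdl (x # us @ vs) f y"
    using pd_cong_open(1)[OF assms(1) Cons.prems(1), of "pdl xs f"] by simp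
  also have "\<dots> = pdl ys f y"
    unfolding ys by (rule pdl_move_head[OF assms(1,2) Cons.prems(1)])
  finally show ?case .
qed simp

section \<open>Positive definite quadratic forms\<close>

lemma sum_rotate3:
  "(\<Sum>a\<in>A. \<Sum>b\<in>B. \<Sum>c\<in>C. f a b c) = (\<Sum>b\<in>B. \<Sum>c\<in>C. \<Sum>a\<in>A. f a b c)"
  by (subst sum.swap) (rule sum.cong[OF refl sum.swap])

lemma sum_swap_pairs:
  "(\<Sum>a\<in>A. \<Sum>b\<in>B. \<Sum>c\<in>C. \<Sum>d\<in>D. f a b c d) = (\<Sum>c\<in>C. \<Sum>d\<in>D. \<Sum>a\<in>A. \<Sum>b\<in>B. f a b c d)"
proof -
  have "(\<Sum>a\<in>A. \<Sum>b\<in>B. \<Sum>c\<in>C. \<Sum>d\<in>D. f a b c d) = (\<Sum>a\<in>A. \<Sum>c\<in>C. \<Sum>b\<in>B. \<Sum>d\<in>D. f a b c d)"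
    by (rule sum.cong[OF refl sum.swap])
  also have "\<dots> = (\<Sum>c\<in>C. \<Sum>a\<in>A. \<Sum>b\<in>B. \<Sum>d\<in>D. f a b c d)"
    by (rule sum.swap)
  also have "\<dots> = (\<Sum>c\<in>C. \<Sum>a\<in>A. \<Sum>d\<in>D. \<Sum>b\<in>B. f a b c d)"
    by (rule sum.cong[OF refl sum.cong[OF refl sum.swap]])
  also have "\<dots> = (\<Sum>c\<in>C. \<Sum>d\<in>D. \<Sum>a\<in>A. \<Sum>b\<in>B. f a b c d)"
    by (rule sum.cong[OF refl sum.swap])
  finally show ?thesis .
qed

definition quad_form :: "('a::finite \<Rightarrow> 'a \<Rightarrow> real) \<Rightarrow> ('a \<Rightarrow> real) \<Rightarrow> real" where
  "quad_form G x = (\<Sum>i\<in>UNIV. \<Sum>j\<in>UNIV. G i j * x i * x j)"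

lemma quad_form_add_delta:
  fixes G :: "'a::finite \<Rightarrow> 'a \<Rightarrow> real"
  assumes sym: "\<And>i j. G i j = G j i"
  shows "quad_form G (\<lambda>i. x i + t * of_bool (i = a))
    = quad_form G x + 2 * t * (\<Sum>j\<in>UNIV. G a j * x j) + t * t * G a a"
proof -
  have e: "G i j * (x i + t * of_bool (i = a)) * (x j + t * of_bool (j = a)) =
     G i j * x i * x j + t * (G i j * x i * of_bool (j = a)) + t * (of_bool (i = a) * (G i j * x j))
     + t * t * (of_bool (i = a) * (G i j * of_bool (j = a)))" for i j
    by (simp add: algebra_simps)
  have "quad_form G (\<lambda>i. x i + t * of_bool (i = a))
    = quad_form G x + t * (\<Sum>i\<in>UNIV. \<Sum>j\<in>UNIV. G i j * x i * of_bool (j = a))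
      + t * (\<Sum>i\<in>UNIV. of_bool (i = a) * (\<Sum>j\<in>UNIV. G i j * x j))
      + t * t * (\<Sum>i\<in>UNIV. of_bool (i = a) * (\<Sum>j\<in>UNIV. G i j * of_bool (j = a)))"
    unfolding quad_form_def e by (simp only: sum.distrib sum_distrib_left)
  also have "\<dots> = quad_form G x + t * (\<Sum>i\<in>UNIV. G i a * x i) + t * (\<Sum>j\<in>UNIV. G a j * x j) + t * t * G a a"
    by simp
  also have "(\<Sum>i\<in>UNIV. G i a * x i) = (\<Sum>j\<in>UNIV. G a j * x j)"
    using sym by simp
  finally show ?thesis by simp
qed

lemma quad_form_delta:
  fixes G :: "'a::finite \<Rightarrow> 'a \<Rightarrow> real"
  shows "quad_form G (\<lambda>i. of_bool (i = a)) = G a a"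
proof -
  have "quad_form G (\<lambda>i. of_bool (i = a)) = (\<Sum>i\<in>UNIV. G i a * of_bool (i = a))"
    unfolding quad_form_def by (intro sum.cong refl) simp
  then show ?thesis by simp
qed

lemma quad_form_diff_rank1:
  fixes G :: "'a::finite \<Rightarrow> 'a \<Rightarrow> real"
  shows "quad_form (\<lambda>i j. G i j - l i * l j) x = quad_form G x - (\<Sum>i\<in>UNIV. l i * x i)\<^sup>2"
proof -
  have "(G i j - l i * l j) * x i * x j = G i j * x i * x j - (l i * x i) * (l j * x j)" for i j
    by (simp add: algebra_simps)
  then show ?thesis
    unfolding quad_form_def power2_eq_square sum_product by (simp add: sum_subtractf)
qed

lemma psd_zero_diagonal_imp_zero_row:
  fixes G :: "'a::finite \<Rightarrow> 'a \<Rightarrow> real"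
  assumes sym: "\<And>i j. G i j = G j i" and psd: "\<And>x. 0 \<le> quad_form G x" and "G a a = 0"
  shows "G a j = 0"
proof (rule ccontr)
  assume "G a j \<noteq> 0"
  define t where "t = - (G j j + 1) / (2 * G a j)"
  have "0 \<le> quad_form G (\<lambda>i. of_bool (i = j) + t * of_bool (i = a))"
    by (rule psd)
  also have "\<dots> = G j j + 2 * t * G a j"
    using \<open>G a a = 0\<close> by (simp add: quad_form_add_delta[OF sym] quad_form_delta)
  also have "\<dots> = -1"
    using \<open>G a j \<noteq> 0\<close> by (simp add: t_def field_simps)
  finally show False by simp
qed

text \<open>One step of Lagrange's reduction of a quadratic form to a sum of squares.\<close>
lemma psd_eliminate_pivot:
  fixes G :: "'a::finite \<Rightarrow> 'a \<Rightarrow> real"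
  assumes sym: "\<And>i j. G i j = G j i" and psd: "\<And>x. 0 \<le> quad_form G x" and "G a a > 0"
  shows "0 \<le> quad_form (\<lambda>i j. G i j - G i a * G j a / G a a) x"
proof -
  define u where "u = (\<Sum>j\<in>UNIV. G a j * x j)"
  have "quad_form (\<lambda>i j. G i j - G i a * G j a / G a a) x
      = quad_form (\<lambda>i j. G i j - (G i a / sqrt (G a a)) * (G j a / sqrt (G a a))) x"
    using \<open>G a a > 0\<close> by (simp add: real_sqrt_mult[symmetric])
  also have "\<dots> = quad_form G x - u * u / G a a"
    unfolding quad_form_diff_rank1 u_def using \<open>G a a > 0\<close> sym
    by (simp add: sum_divide_distrib[symmetric] power_divide mult.commute power2_eq_square)
  also have "\<dots> = quad_form G (\<lambda>i. x i + (- u / G a a) * of_bool (i = a))"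
    unfolding quad_form_add_delta[OF sym] u_def[symmetric] using \<open>G a a > 0\<close>
    by (simp add: field_simps)
  finally show ?thesis using psd by simp
qed

lemma psd_sum_of_squares:
  fixes G :: "'a::finite \<Rightarrow> 'a \<Rightarrow> real" and S :: "'a set"
  assumes "\<And>i j. G i j = G j i" "\<And>i j. i \<notin> S \<Longrightarrow> G i j = 0" "\<And>x. 0 \<le> quad_form G x"
  shows "\<exists>L. \<forall>i j. G i j = (\<Sum>r\<in>S. L r i * L r j)"
  using finite[of S] assms
proof (induction S arbitrary: G rule: finite_induct)
  case (insert a S)
  note sym = insert.prems(1) and psd = insert.prems(3)
  \<comment> \<open>if \<open>G a a = 0\<close> the \<open>a\<close>-th row vanishes, and \<open>l = 0\<close> by the convention \<open>x / 0 = 0\<close>\<close>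
  define l where "l i = G i a / sqrt (G a a)" for i
  define G' where "G' i j = G i j - l i * l j" for i j
  have "G a a \<ge> 0" using psd[of "\<lambda>i. of_bool (i = a)"] by (simp add: quad_form_delta)
  then have G': "G' i j = G i j - G i a * G j a / G a a" for i j
    by (simp add: G'_def l_def real_sqrt_mult[symmetric])
  have zero_row: "G a j = 0" if "\<not> G a a > 0" for j
    using psd_zero_diagonal_imp_zero_row[OF sym psd] that \<open>G a a \<ge> 0\<close> by simp
  have "G' i j = G' j i" for i j
    unfolding G' using sym[of i j] sym[of a i] sym[of a j] by simp
  moreover have "G' i j = 0" if "i \<notin> S" for i j
  proof (cases "i = a")
    case True
    then show ?thesis
      using zero_row sym[of a j] unfolding G' by (cases "G a a > 0") simp_all
  next
    case False
    then show ?thesis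
      using that insert.prems(2) unfolding G' by simp
  qed
  moreover have "0 \<le> quad_form G' x" for x
  proof (cases "G a a > 0")
    case True
    then show ?thesis unfolding G' by (rule psd_eliminate_pivot[OF sym psd])
  next
    case False
    then have "G' = G" using zero_row sym by (auto simp: G' fun_eq_iff)
    then show ?thesis using psd by simp
  qed
  ultimately obtain L where L: "\<forall>i j. G' i j = (\<Sum>r\<in>S. L r i * L r j)"
    using insert.IH by blast
  have "G i j = (\<Sum>r\<in>insert a S. (L(a := l)) r i * (L(a := l)) r j)" for i j
  proof -
    have "(\<Sum>r\<in>S. (L(a := l)) r i * (L(a := l)) r j) = (\<Sum>r\<in>S. L r i * L r j)"
      using insert.hyps(2) by (intro sum.cong) auto
    moreover have "G i j = l i * l j + G' i j" by (simp add: G'_def)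
    ultimately show ?thesis using insert.hyps L by simp
  qed
  then show ?case by blast
qed simp

lemma quad_form_gram:
  fixes G :: "'a::finite \<Rightarrow> 'a \<Rightarrow> real"
  assumes "\<And>i j. G i j = (\<Sum>r\<in>UNIV. L r i * L r j)"
  shows "(\<Sum>k\<in>UNIV. \<Sum>m\<in>UNIV. G k m * a k * b m)
    = (\<Sum>r\<in>UNIV. (\<Sum>k\<in>UNIV. L r k * a k) * (\<Sum>m\<in>UNIV. L r m * b m))"
proof -
  have "(\<Sum>k\<in>UNIV. \<Sum>m\<in>UNIV. G k m * a k * b m)
      = (\<Sum>k\<in>UNIV. \<Sum>m\<in>UNIV. \<Sum>r\<in>UNIV. (L r k * a k) * (L r m * b m))"
    unfolding assms by (simp add: sum_distrib_left sum_distrib_right mult_ac)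
  also have "\<dots> = (\<Sum>r\<in>UNIV. \<Sum>k\<in>UNIV. \<Sum>m\<in>UNIV. (L r k * a k) * (L r m * b m))"
    by (rule sum_rotate3[symmetric])
  also have "\<dots> = (\<Sum>r\<in>UNIV. (\<Sum>k\<in>UNIV. L r k * a k) * (\<Sum>m\<in>UNIV. L r m * b m))"
    by (simp add: sum_product)
  finally show ?thesis .
qed

definition gram_inner :: "('a::finite \<Rightarrow> 'a \<Rightarrow> real) \<Rightarrow> ('a \<Rightarrow> 'a \<Rightarrow> real) \<Rightarrow> ('a \<Rightarrow> 'a \<Rightarrow> real) \<Rightarrow> real" where
  "gram_inner G \<xi> \<eta> = (\<Sum>i\<in>UNIV. \<Sum>j\<in>UNIV. \<Sum>k\<in>UNIV. \<Sum>l\<in>UNIV. G i j * G k l * \<xi> i k * \<eta> j l)"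

lemma gram_inner_pos:
  fixes G :: "'a::finite \<Rightarrow> 'a \<Rightarrow> real"
  assumes sym: "\<And>i j. G i j = G j i" and pos: "\<And>x. x \<noteq> (\<lambda>_. 0) \<Longrightarrow> quad_form G x > 0"
    and "\<xi> \<noteq> (\<lambda>_ _. 0)"
  shows "gram_inner G \<xi> \<xi> > 0"
proof -
  have psd: "0 \<le> quad_form G x" for x
    using pos[of x] by (cases "x = (\<lambda>_. 0)") (auto simp: quad_form_def)
  have "\<exists>L. \<forall>i j. G i j = (\<Sum>r\<in>(UNIV :: 'a set). L r i * L r j)"
    by (rule psd_sum_of_squares) (use sym psd in auto)
  then obtain L :: "'a \<Rightarrow> 'a \<Rightarrow> real" where L: "\<And>i j. G i j = (\<Sum>r\<in>UNIV. L r i * L r j)"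
    by blast
  define w where "w r i = (\<Sum>k\<in>UNIV. L r k * \<xi> i k)" for r i
  have "gram_inner G \<xi> \<xi>
      = (\<Sum>i\<in>UNIV. \<Sum>j\<in>UNIV. G i j * (\<Sum>k\<in>UNIV. \<Sum>l\<in>UNIV. G k l * \<xi> i k * \<xi> j l))"
    unfolding gram_inner_def by (simp add: sum_distrib_left mult_ac)
  also have "\<dots> = (\<Sum>i\<in>UNIV. \<Sum>j\<in>UNIV. \<Sum>r\<in>UNIV. G i j * w r i * w r j)"
    unfolding quad_form_gram[OF L] w_def[symmetric] by (simp add: sum_distrib_left mult_ac)
  also have "\<dots> = (\<Sum>r\<in>UNIV. quad_form G (w r))"
    unfolding quad_form_def by (rule sum_rotate3[symmetric])
  finally have gram: "gram_inner G \<xi> \<xi> = (\<Sum>r\<in>UNIV. quad_form G (w r))" .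
  have "w r = (\<lambda>_. 0)" if "gram_inner G \<xi> \<xi> = 0" for r
    using pos[of "w r"] psd that unfolding gram by (auto simp: sum_nonneg_eq_0_iff)
  moreover have "quad_form G (\<xi> i) = (\<Sum>r\<in>UNIV. w r i * w r i)" for i
    unfolding quad_form_def quad_form_gram[OF L] w_def ..
  ultimately have "\<xi> i = (\<lambda>_. 0)" if "gram_inner G \<xi> \<xi> = 0" for i
    using pos[of "\<xi> i"] that by fastforce
  with \<open>\<xi> \<noteq> (\<lambda>_ _. 0)\<close> have "gram_inner G \<xi> \<xi> \<noteq> 0"
    by (auto simp: fun_eq_iff)
  moreover have "gram_inner G \<xi> \<xi> \<ge> 0"
    unfolding gram by (simp add: psd sum_nonneg)
  ultimately show ?thesis by simp
qed

section \<open>Tensors with the symmetries of the Hessian curvature\<close>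

definition tensor_pairing :: "('a::finite \<Rightarrow> 'a \<Rightarrow> 'a \<Rightarrow> 'a \<Rightarrow> real) \<Rightarrow> ('a \<Rightarrow> 'a \<Rightarrow> real) \<Rightarrow> ('a \<Rightarrow> 'a \<Rightarrow> real) \<Rightarrow> real" where
  "tensor_pairing T \<xi> \<eta> = (\<Sum>i\<in>UNIV. \<Sum>k\<in>UNIV. \<Sum>j\<in>UNIV. \<Sum>l\<in>UNIV. T i j k l * \<xi> j l * \<eta> i k)"

definition hessian_symmetric :: "('a \<Rightarrow> 'a \<Rightarrow> 'a \<Rightarrow> 'a \<Rightarrow> real) \<Rightarrow> bool" where
  "hessian_symmetric T \<longleftrightarrow>
     (\<forall>i j k l. T i j k l = T k j i l \<and> T i j k l = T i l k j \<and> T i j k l = T j i l k)"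

definition sym_basis :: "'a \<Rightarrow> 'a \<Rightarrow> 'a \<Rightarrow> 'a \<Rightarrow> real" where
  "sym_basis p q j l = of_bool (j = p) * of_bool (l = q) + of_bool (j = q) * of_bool (l = p)"

lemma sum_sym_basis:
  fixes f :: "'a::finite \<Rightarrow> 'a \<Rightarrow> real"
  shows "(\<Sum>j\<in>UNIV. \<Sum>l\<in>UNIV. f j l * sym_basis p q j l) = f p q + f q p"
proof -
  have "(\<Sum>j\<in>UNIV. \<Sum>l\<in>UNIV. f j l * sym_basis p q j l)
      = (\<Sum>j\<in>UNIV. f j q * of_bool (j = p) + f j p * of_bool (j = q))"
    unfolding sym_basis_def by (intro sum.cong refl) (simp add: algebra_simps sum.distrib)
  then show ?thesis by (simp add: sum.distrib)
qed

lemma tensor_pairing_sym_basis: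
  assumes "hessian_symmetric T"
  shows "tensor_pairing T (sym_basis p q) (sym_basis r s) = 4 * T r p s q"
proof -
  have "(\<Sum>j\<in>UNIV. \<Sum>l\<in>UNIV. T i j k l * sym_basis p q j l * sym_basis r s i k)
      = (T i p k q + T i q k p) * sym_basis r s i k" for i k
    by (simp only: sum_distrib_right[symmetric] sum_sym_basis)
  then have "tensor_pairing T (sym_basis p q) (sym_basis r s)
      = (\<Sum>i\<in>UNIV. \<Sum>k\<in>UNIV. (T i p k q + T i q k p) * sym_basis r s i k)"
    unfolding tensor_pairing_def by simp
  also have "\<dots> = (T r p s q + T r q s p) + (T s p r q + T s q r p)"
    by (rule sum_sym_basis)
  also have "\<dots> = 4 * T r p s q"
  proof -
    have "T r q s p = T r p s q" "T s p r q = T r p s q" "T s q r p = T r q s p"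
      using assms unfolding hessian_symmetric_def by metis+
    then show ?thesis by linarith
  qed
  finally show ?thesis .
qed

lemma tensor_pairing_add:
  "tensor_pairing T (\<lambda>j l. \<xi> j l + \<eta> j l) (\<lambda>j l. \<xi> j l + \<eta> j l)
    = tensor_pairing T \<xi> \<xi> + tensor_pairing T \<xi> \<eta> + tensor_pairing T \<eta> \<xi> + tensor_pairing T \<eta> \<eta>"
proof -
  have "T i j k l * (\<xi> j l + \<eta> j l) * (\<xi> i k + \<eta> i k) =
    T i j k l * \<xi> j l * \<xi> i k + T i j k l * \<xi> j l * \<eta> i k + T i j k l * \<eta> j l * \<xi> i k
    + T i j k l * \<eta> j l * \<eta> i k" for i j k l
    by (simp add: algebra_simps)
  then show ?thesis unfolding tensor_pairing_def by (simp only: sum.distrib)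
qed

lemma tensor_pairing_diff:
  "tensor_pairing (\<lambda>i j k l. T i j k l - T' i j k l) \<xi> \<eta> = tensor_pairing T \<xi> \<eta> - tensor_pairing T' \<xi> \<eta>"
proof -
  have "(T i j k l - T' i j k l) * \<xi> j l * \<eta> i k = T i j k l * \<xi> j l * \<eta> i k - T' i j k l * \<xi> j l * \<eta> i k"
    for i j k l by (simp add: algebra_simps)
  then show ?thesis unfolding tensor_pairing_def by (simp only: sum_subtractf)
qed

lemma tensor_pairing_commute:
  assumes "hessian_symmetric T"
  shows "tensor_pairing T \<eta> \<xi> = tensor_pairing T \<xi> \<eta>"
proof -
  have swap: "T j i l k = T i j k l" for i j k l
    using assms unfolding hessian_symmetric_def by metis
  have "tensor_pairing T \<eta> \<xi> = (\<Sum>j\<in>UNIV. \<Sum>l\<in>UNIV. \<Sum>i\<in>UNIV. \<Sum>k\<in>UNIV. T i j k l * \<eta> j l * \<xi> i k)"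
    unfolding tensor_pairing_def by (rule sum_swap_pairs)
  also have "\<dots> = tensor_pairing T \<xi> \<eta>"
    unfolding tensor_pairing_def by (intro sum.cong refl) (subst swap, simp add: mult_ac)
  finally show ?thesis .
qed

lemma hessian_symmetric_eq_zeroI:
  fixes T :: "'a::finite \<Rightarrow> 'a \<Rightarrow> 'a \<Rightarrow> 'a \<Rightarrow> real"
  assumes "hessian_symmetric T" and vanish: "\<And>\<xi>. sym2 \<xi> \<Longrightarrow> tensor_pairing T \<xi> \<xi> = 0"
  shows "T r p s q = 0"
proof -
  have sym: "sym2 (sym_basis p q)" "sym2 (sym_basis r s)"
    "sym2 (\<lambda>j l. sym_basis p q j l + sym_basis r s j l)"
    by (auto simp: sym2_def sym_basis_def)
  have "0 = tensor_pairing T (\<lambda>j l. sym_basis p q j l + sym_basis r s j l)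
              (\<lambda>j l. sym_basis p q j l + sym_basis r s j l)"
    using vanish[OF sym(3)] by simp
  also have "\<dots> = 2 * tensor_pairing T (sym_basis p q) (sym_basis r s)"
    unfolding tensor_pairing_add tensor_pairing_commute[OF assms(1), of "sym_basis r s" "sym_basis p q"]
    using vanish[OF sym(1)] vanish[OF sym(2)] by simp
  finally show ?thesis
    unfolding tensor_pairing_sym_basis[OF assms(1)] by simp
qed

lemma hessian_symmetric_diff:
  "hessian_symmetric T \<Longrightarrow> hessian_symmetric T' \<Longrightarrow> hessian_symmetric (\<lambda>i j k l. T i j k l - T' i j k l)"
  unfolding hessian_symmetric_def by metis

lemma hessian_symmetric_eq_iff_tensor_pairing_eq:
  fixes T T' :: "'a::finite \<Rightarrow> 'a \<Rightarrow> 'a \<Rightarrow> 'a \<Rightarrow> real"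
  assumes "hessian_symmetric T" "hessian_symmetric T'"
  shows "(\<forall>\<xi>. sym2 \<xi> \<longrightarrow> tensor_pairing T \<xi> \<xi> = tensor_pairing T' \<xi> \<xi>) \<longleftrightarrow> T = T'"
proof
  assume "\<forall>\<xi>. sym2 \<xi> \<longrightarrow> tensor_pairing T \<xi> \<xi> = tensor_pairing T' \<xi> \<xi>"
  then have "tensor_pairing (\<lambda>i j k l. T i j k l - T' i j k l) \<xi> \<xi> = 0" if "sym2 \<xi>" for \<xi>
    using that by (simp add: tensor_pairing_diff)
  from hessian_symmetric_eq_zeroI[OF hessian_symmetric_diff[OF assms] this]
  have "T i j k l - T' i j k l = 0" for i j k l
    by simp
  then show "T = T'" by (simp add: fun_eq_iff)
qed simp

lemma gram_inner_raise_eq_tensor_pairing: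
  fixes G M :: "'a::finite \<Rightarrow> 'a \<Rightarrow> real" and R :: "'a \<Rightarrow> 'a \<Rightarrow> 'a \<Rightarrow> 'a \<Rightarrow> real"
  assumes inv: "\<And>l m. (\<Sum>k\<in>UNIV. G l k * M k m) = of_bool (l = m)" and sym: "\<And>i j. G i j = G j i"
  shows "gram_inner G (\<lambda>i k. \<Sum>j\<in>UNIV. \<Sum>l\<in>UNIV. (\<Sum>m\<in>UNIV. M k m * R i j m l) * \<xi> j l) \<eta>
    = tensor_pairing (\<lambda>i j k l. \<Sum>m\<in>UNIV. G i m * R m j k l) \<xi> \<eta>"
proof -
  define P where "P i m = (\<Sum>j\<in>UNIV. \<Sum>l\<in>UNIV. R i j m l * \<xi> j l)" for i m
  have raised: "(\<Sum>j\<in>UNIV. \<Sum>l\<in>UNIV. (\<Sum>m\<in>UNIV. M k m * R i j m l) * \<xi> j l) = (\<Sum>m\<in>UNIV. M k m * P i m)"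
    for i k
  proof -
    have "(\<Sum>j\<in>UNIV. \<Sum>l\<in>UNIV. (\<Sum>m\<in>UNIV. M k m * R i j m l) * \<xi> j l)
        = (\<Sum>j\<in>UNIV. \<Sum>l\<in>UNIV. \<Sum>m\<in>UNIV. M k m * (R i j m l * \<xi> j l))"
      by (simp add: sum_distrib_left sum_distrib_right mult_ac)
    also have "\<dots> = (\<Sum>m\<in>UNIV. \<Sum>j\<in>UNIV. \<Sum>l\<in>UNIV. M k m * (R i j m l * \<xi> j l))"
      by (rule sum_rotate3[symmetric])
    finally show ?thesis
      unfolding P_def by (simp add: sum_distrib_left)
  qed
  have lowered: "(\<Sum>k\<in>UNIV. G l k * (\<Sum>m\<in>UNIV. M k m * P i m)) = P i l" for i l
  proof -
    have "(\<Sum>k\<in>UNIV. G l k * (\<Sum>m\<in>UNIV. M k m * P i m)) = (\<Sum>k\<in>UNIV. \<Sum>m\<in>UNIV. G l k * M k m * P i m)"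
      by (simp add: sum_distrib_left mult_ac)
    also have "\<dots> = (\<Sum>m\<in>UNIV. (\<Sum>k\<in>UNIV. G l k * M k m) * P i m)"
      by (subst sum.swap) (simp add: sum_distrib_right)
    finally show ?thesis by (simp add: inv)
  qed
  have contracted: "(\<Sum>i\<in>UNIV. G j i * P i l * \<eta> j l)
      = (\<Sum>a\<in>UNIV. \<Sum>b\<in>UNIV. (\<Sum>i\<in>UNIV. G j i * R i a l b) * \<xi> a b * \<eta> j l)" for j l
  proof -
    have "(\<Sum>i\<in>UNIV. G j i * P i l * \<eta> j l)
        = (\<Sum>i\<in>UNIV. \<Sum>a\<in>UNIV. \<Sum>b\<in>UNIV. G j i * R i a l b * \<xi> a b * \<eta> j l)"
      unfolding P_def by (simp add: sum_distrib_left sum_distrib_right mult_ac)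
    also have "\<dots> = (\<Sum>a\<in>UNIV. \<Sum>b\<in>UNIV. \<Sum>i\<in>UNIV. G j i * R i a l b * \<xi> a b * \<eta> j l)"
      by (rule sum_rotate3)
    finally show ?thesis
      by (simp add: sum_distrib_right)
  qed
  have "gram_inner G (\<lambda>i k. \<Sum>m\<in>UNIV. M k m * P i m) \<eta>
      = (\<Sum>i\<in>UNIV. \<Sum>j\<in>UNIV. \<Sum>l\<in>UNIV. \<Sum>k\<in>UNIV. G i j * G k l * (\<Sum>m\<in>UNIV. M k m * P i m) * \<eta> j l)"
    unfolding gram_inner_def by (intro sum.cong refl sum.swap)
  also have "\<dots> = (\<Sum>i\<in>UNIV. \<Sum>j\<in>UNIV. \<Sum>l\<in>UNIV. G i j * \<eta> j l * (\<Sum>k\<in>UNIV. G l k * (\<Sum>m\<in>UNIV. M k m * P i m)))"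
    using sym by (intro sum.cong refl) (simp add: sum_distrib_left mult_ac)
  also have "\<dots> = (\<Sum>i\<in>UNIV. \<Sum>j\<in>UNIV. \<Sum>l\<in>UNIV. G i j * \<eta> j l * P i l)"
    by (simp only: lowered)
  also have "\<dots> = (\<Sum>j\<in>UNIV. \<Sum>l\<in>UNIV. \<Sum>i\<in>UNIV. G i j * \<eta> j l * P i l)"
    by (rule sum_rotate3)
  also have "\<dots> = (\<Sum>j\<in>UNIV. \<Sum>l\<in>UNIV. \<Sum>i\<in>UNIV. G j i * P i l * \<eta> j l)"
    using sym by (simp add: mult_ac)
  also have "\<dots> = (\<Sum>j\<in>UNIV. \<Sum>l\<in>UNIV. \<Sum>a\<in>UNIV. \<Sum>b\<in>UNIV. (\<Sum>i\<in>UNIV. G j i * R i a l b) * \<xi> a b * \<eta> j l)"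
    by (simp only: contracted)
  also have "\<dots> = tensor_pairing (\<lambda>i j k l. \<Sum>m\<in>UNIV. G i m * R m j k l) \<xi> \<eta>"
    unfolding tensor_pairing_def ..
  finally show ?thesis
    unfolding raised .
qed

definition const_hessian_tensor :: "real \<Rightarrow> ('a \<Rightarrow> 'a \<Rightarrow> real) \<Rightarrow> 'a \<Rightarrow> 'a \<Rightarrow> 'a \<Rightarrow> 'a \<Rightarrow> real" where
  "const_hessian_tensor c G i j k l = c / 2 * (G i j * G k l + G i l * G j k)"

lemma hessian_symmetric_const_hessian_tensor:
  assumes "\<And>i j. G i j = G j i"
  shows "hessian_symmetric (const_hessian_tensor c G)"
  unfolding hessian_symmetric_def const_hessian_tensor_def
  by (metis assms mult.commute add.commute)

lemma tensor_pairing_const_hessian_tensor: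
  fixes G :: "'a::finite \<Rightarrow> 'a \<Rightarrow> real"
  assumes sym: "\<And>i j. G i j = G j i" and "sym2 \<xi>"
  shows "tensor_pairing (const_hessian_tensor c G) \<xi> \<xi> = c * gram_inner G \<xi> \<xi>"
proof -
  define X where "X = (\<Sum>i\<in>UNIV. \<Sum>k\<in>UNIV. \<Sum>j\<in>UNIV. \<Sum>l\<in>UNIV. G i j * G k l * \<xi> i k * \<xi> j l)"
  have gram: "gram_inner G \<xi> \<xi> = X"
    unfolding gram_inner_def X_def by (rule sum.cong[OF refl sum.swap])
  have regroup: "G i l * G j k * \<xi> j l * \<xi> i k = G i l * G k j * \<xi> i k * \<xi> l j" for i j k l
    using sym[of j k] \<open>sym2 \<xi>\<close> by (simp add: sym2_def)
  have "(\<Sum>i\<in>UNIV. \<Sum>k\<in>UNIV. \<Sum>j\<in>UNIV. \<Sum>l\<in>UNIV. G i l * G j k * \<xi> j l * \<xi> i k)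
      = (\<Sum>i\<in>UNIV. \<Sum>k\<in>UNIV. \<Sum>j\<in>UNIV. \<Sum>l\<in>UNIV. G i l * G k j * \<xi> i k * \<xi> l j)"
    by (simp only: regroup)
  also have "\<dots> = X"
    unfolding X_def by (rule sum.cong[OF refl sum.cong[OF refl sum.swap]])
  finally have second: "(\<Sum>i\<in>UNIV. \<Sum>k\<in>UNIV. \<Sum>j\<in>UNIV. \<Sum>l\<in>UNIV. G i l * G j k * \<xi> j l * \<xi> i k) = X" .
  have first: "(\<Sum>i\<in>UNIV. \<Sum>k\<in>UNIV. \<Sum>j\<in>UNIV. \<Sum>l\<in>UNIV. G i j * G k l * \<xi> j l * \<xi> i k) = X"
    unfolding X_def by (simp add: mult_ac)
  have "const_hessian_tensor c G i j k l * \<xi> j l * \<xi> i k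
      = c / 2 * (G i j * G k l * \<xi> j l * \<xi> i k) + c / 2 * (G i l * G j k * \<xi> j l * \<xi> i k)" for i j k l
    by (simp add: const_hessian_tensor_def algebra_simps)
  then have "tensor_pairing (const_hessian_tensor c G) \<xi> \<xi>
      = c / 2 * (\<Sum>i\<in>UNIV. \<Sum>k\<in>UNIV. \<Sum>j\<in>UNIV. \<Sum>l\<in>UNIV. G i j * G k l * \<xi> j l * \<xi> i k)
      + c / 2 * (\<Sum>i\<in>UNIV. \<Sum>k\<in>UNIV. \<Sum>j\<in>UNIV. \<Sum>l\<in>UNIV. G i l * G j k * \<xi> j l * \<xi> i k)"
    unfolding tensor_pairing_def by (simp only: sum.distrib sum_distrib_left)
  then show ?thesis
    unfolding first second gram by simp
qed

section \<open>Inverse matrices\<close>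

lemma matrix_inv_mult:
  fixes A :: "'a::semiring_1^'n^'m"
  assumes "invertible A"
  shows "A ** matrix_inv A = mat 1" and "matrix_inv A ** A = mat 1"
proof -
  have "A ** matrix_inv A = mat 1 \<and> matrix_inv A ** A = mat 1"
    using assms unfolding invertible_def matrix_inv_def by (rule someI_ex)
  then show "A ** matrix_inv A = mat 1" and "matrix_inv A ** A = mat 1" by auto
qed

lemma transpose_matrix_inv_symmetric:
  fixes A :: "'a::comm_semiring_1^'n^'n"
  assumes "invertible A" "transpose A = A"
  shows "transpose (matrix_inv A) = matrix_inv A"
proof -
  have left_inverse: "transpose (matrix_inv A) ** A = mat 1"
    using arg_cong[OF matrix_inv_mult(1)[OF assms(1)], of transpose]
    unfolding matrix_transpose_mul assms(2) by simp
  have "transpose (matrix_inv A) = transpose (matrix_inv A) ** (A ** matrix_inv A)"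
    by (simp add: matrix_inv_mult(1)[OF assms(1)])
  also have "\<dots> = (transpose (matrix_inv A) ** A) ** matrix_inv A"
    by (rule matrix_mul_assoc)
  finally show ?thesis
    unfolding left_inverse by simp
qed

lemma matrix_inv_cramer:
  fixes A :: "'a::field^'n^'n"
  assumes "invertible A"
  shows "matrix_inv A $ i $ j = det (\<chi> a b. if b = i then axis j 1 $ a else A $ a $ b) / det A"
proof -
  have "A *v (matrix_inv A *v axis j 1) = axis j 1"
    by (simp add: matrix_vector_mul_assoc matrix_inv_mult(1)[OF assms])
  then have "matrix_inv A *v axis j 1 = (\<chi> k. det (\<chi> a b. if b = k then axis j 1 $ a else A $ a $ b) / det A)"
    using cramer assms invertible_det_nz by blast
  moreover have "(matrix_inv A *v axis j 1) $ i = matrix_inv A $ i $ j"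
    by (simp add: matrix_vector_mult_def axis_def if_distrib cong: if_cong)
  ultimately show ?thesis by simp
qed

lemma det_differentiable:
  fixes F :: "real \<Rightarrow> real^'n::finite^'n"
  assumes "\<And>a b. (\<lambda>t. F t $ a $ b) differentiable (at t0)"
  shows "(\<lambda>t. det (F t)) differentiable (at t0)"
proof -
  obtain D where D: "\<And>a b. ((\<lambda>t. F t $ a $ b) has_derivative D a b) (at t0)"
    using assms unfolding differentiable_def by metis
  have "(\<lambda>t. \<Prod>a\<in>UNIV. F t $ a $ p a) differentiable (at t0)" for p :: "'n \<Rightarrow> 'n"
    unfolding differentiable_def by (rule exI, rule has_derivative_prod, rule D)
  then show ?thesis
    unfolding det_def by (simp add: finite_permutations)
qed

section \<open>Hessian charts\<close>

lemma hess_metric_eq_pdl: "hess_metric h y i j = pdl [i, j] h y"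
  by (simp add: hess_metric_def)

definition hess_matrix :: "(real^'q::finite \<Rightarrow> real) \<Rightarrow> real^'q \<Rightarrow> real^'q^'q" where
  "hess_matrix h y = (\<chi> a b. hess_metric h y a b)"

lemma hess_matrix_component [simp]: "hess_matrix h y $ a $ b = hess_metric h y a b"
  by (simp add: hess_matrix_def)

lemma metric_inv_eq_matrix_inv: "metric_inv h y i j = matrix_inv (hess_matrix h y) $ i $ j"
  by (simp add: metric_inv_def hess_matrix_def)

locale hessian_chart =
  fixes U :: "(real^'q::finite) set" and h :: "real^'q \<Rightarrow> real"
  assumes open_U: "open U" and potential: "hessian_potential U h"
begin

lemma smooth: "smooth_on U h"
  using potential unfolding hessian_potential_def by blast

lemma pdl_perm: "y \<in> U \<Longrightarrow> mset xs = mset ys \<Longrightarrow> pdl xs h y = pdl ys h y"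
  by (rule pdl_mset_eq[OF open_U smooth])

lemma pd_differentiable_pdl: "y \<in> U \<Longrightarrow> pd_differentiable (pdl is h) y k"
  by (rule smooth_on_pd_differentiable[OF smooth])

lemma hess_metric_sym: "y \<in> U \<Longrightarrow> hess_metric h y i j = hess_metric h y j i"
  unfolding hess_metric_eq_pdl by (rule pdl_perm) simp_all

lemma quad_form_hess_metric_pos:
  assumes "y \<in> U" "x \<noteq> (\<lambda>_. 0)"
  shows "quad_form (hess_metric h y) x > 0"
proof -
  have "(\<chi> i. x i) \<noteq> 0" using assms(2) by (auto simp: vec_eq_iff fun_eq_iff)
  then show ?thesis
    using potential assms(1) unfolding hessian_potential_def quad_form_def by fastforce
qed

lemma invertible_hess_matrix:
  assumes "y \<in> U"
  shows "invertible (hess_matrix h y)"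
  unfolding invertible_left_inverse matrix_left_invertible_ker
proof (intro allI impI)
  fix x assume x: "hess_matrix h y *v x = 0"
  have "quad_form (hess_metric h y) (\<lambda>i. x $ i) = (\<Sum>i\<in>UNIV. x $ i * (hess_matrix h y *v x) $ i)"
    unfolding quad_form_def hess_matrix_def matrix_vector_mult_def
    by (simp add: sum_distrib_left mult_ac)
  also have "\<dots> = 0" using x by simp
  finally show "x = 0"
    using quad_form_hess_metric_pos[OF assms, of "\<lambda>i. x $ i"] by (force simp: vec_eq_iff)
qed

lemma metric_inv_sym:
  assumes "y \<in> U"
  shows "metric_inv h y i j = metric_inv h y j i"
proof -
  have "transpose (hess_matrix h y) = hess_matrix h y"
    using hess_metric_sym[OF assms] by (simp add: transpose_def hess_matrix_def vec_eq_iff)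
  from transpose_matrix_inv_symmetric[OF invertible_hess_matrix[OF assms] this]
  have "transpose (matrix_inv (hess_matrix h y)) $ j $ i = matrix_inv (hess_matrix h y) $ j $ i"
    by simp
  then show ?thesis
    unfolding metric_inv_eq_matrix_inv by (simp add: transpose_def)
qed

lemma hess_metric_metric_inv:
  assumes "y \<in> U"
  shows "(\<Sum>k\<in>UNIV. hess_metric h y l k * metric_inv h y k m) = of_bool (l = m)"
  using arg_cong[OF matrix_inv_mult(1)[OF invertible_hess_matrix[OF assms]], of "\<lambda>A. A $ l $ m"]
  by (simp add: matrix_matrix_mult_def mat_def metric_inv_eq_matrix_inv hess_matrix_def)

lemma pd_differentiable_metric_inv:
  assumes "y \<in> U"
  shows "pd_differentiable (\<lambda>z. metric_inv h z i j) y k"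
proof -
  let ?cramer = "\<lambda>z. det (\<chi> a b. if b = i then axis j 1 $ a else hess_matrix h z $ a $ b) / det (hess_matrix h z)"
  have entries: "(\<lambda>t. hess_metric h (y + t *\<^sub>R axis k 1) a b) differentiable (at 0)" for a b
    using pd_differentiable_pdl[OF assms, of "[a, b]" k] by (simp add: pd_differentiable_def hess_metric_eq_pdl)
  have cramer_differentiable: "pd_differentiable ?cramer y k"
    unfolding pd_differentiable_def
  proof (intro differentiable_divide det_differentiable)
    fix a b
    show "(\<lambda>t. (\<chi> a b. if b = i then axis j 1 $ a else hess_matrix h (y + t *\<^sub>R axis k 1) $ a $ b) $ a $ b)
      differentiable (at 0)"
      using entries by (cases "b = i") simp_all
    show "(\<lambda>t. hess_matrix h (y + t *\<^sub>R axis k 1) $ a $ b) differentiable (at 0)"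
      using entries by simp
    have "det (hess_matrix h y) \<noteq> 0"
      using invertible_hess_matrix[OF assms] invertible_det_nz by blast
    then show "det (hess_matrix h (y + 0 *\<^sub>R axis k 1)) \<noteq> 0"
      by simp
  qed
  have "metric_inv h z i j = ?cramer z" if "z \<in> U" for z
    unfolding metric_inv_eq_matrix_inv by (rule matrix_inv_cramer[OF invertible_hess_matrix[OF that]])
  from pd_cong_open(2)[OF open_U assms this] cramer_differentiable show ?thesis
    by simp
qed

lemma hess_gamma_eq:
  assumes "z \<in> U"
  shows "hess_gamma h z m j l = 1/2 * (\<Sum>n\<in>UNIV. metric_inv h z m n * pdl [n, j, l] h z)"
proof -
  have "pdl [j, n, l] h z = pdl [n, j, l] h z" "pdl [l, n, j] h z = pdl [n, j, l] h z"
    "pdl [n, l, j] h z = pdl [n, j, l] h z" for n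
    by (rule pdl_perm[OF assms], simp)+
  then show ?thesis
    by (simp add: hess_gamma_def christoffel_def hess_metric_eq_pdl[abs_def])
qed

lemma pd_differentiable_hess_gamma:
  assumes "y \<in> U"
  shows "pd_differentiable (\<lambda>z. hess_gamma h z m j l) y k"
proof -
  have "pd_differentiable (\<lambda>z. 1/2 * (\<Sum>n\<in>UNIV. metric_inv h z m n * pdl [n, j, l] h z)) y k"
    by (intro pd_cmult(2) pd_sum(2) pd_mult(2) pd_differentiable_metric_inv pd_differentiable_pdl assms)
      simp
  with pd_cong_open(2)[OF open_U assms hess_gamma_eq] show ?thesis
    by simp
qed

lemma hess_metric_hess_gamma:
  assumes "z \<in> U"
  shows "(\<Sum>m\<in>UNIV. hess_metric h z i m * hess_gamma h z m j l) = 1/2 * pdl [i, j, l] h z"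
proof -
  have "(\<Sum>m\<in>UNIV. hess_metric h z i m * hess_gamma h z m j l)
      = 1/2 * (\<Sum>m\<in>UNIV. \<Sum>n\<in>UNIV. hess_metric h z i m * metric_inv h z m n * pdl [n, j, l] h z)"
    unfolding hess_gamma_eq[OF assms] by (simp add: sum_distrib_left mult_ac)
  also have "\<dots> = 1/2 * (\<Sum>n\<in>UNIV. (\<Sum>m\<in>UNIV. hess_metric h z i m * metric_inv h z m n) * pdl [n, j, l] h z)"
    by (subst sum.swap) (simp add: sum_distrib_right)
  finally show ?thesis
    by (simp add: hess_metric_metric_inv[OF assms])
qed

lemma hessQ_low_eq:
  assumes "y \<in> U"
  shows "hessQ_low h y i j k l = 1/2 * pdl [k, i, j, l] h y
     - 1/2 * (\<Sum>m\<in>UNIV. \<Sum>n\<in>UNIV. pdl [k, i, m] h y * metric_inv h y m n * pdl [n, j, l] h y)"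
proof -
  let ?lowered = "\<lambda>z. \<Sum>m\<in>UNIV. hess_metric h z i m * hess_gamma h z m j l"
  have metric_differentiable: "pd_differentiable (\<lambda>z. hess_metric h z i m) y k" for m
    using pd_differentiable_pdl[OF assms, of "[i, m]"] by (simp add: hess_metric_eq_pdl)
  have "pd k ?lowered y = pd k (\<lambda>z. 1/2 * pdl [i, j, l] h z) y"
    by (rule pd_cong_open(1)[OF open_U assms hess_metric_hess_gamma])
  also have "\<dots> = 1/2 * pdl [k, i, j, l] h y"
    unfolding pd_cmult(1)[OF pd_differentiable_pdl[OF assms, of "[i, j, l]"]] by simp
  finally have "pd k ?lowered y = 1/2 * pdl [k, i, j, l] h y" .
  moreover have "pd k ?lowered y = (\<Sum>m\<in>UNIV. pdl [k, i, m] h y * hess_gamma h y m j l) + hessQ_low h y i j k l"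
    using metric_differentiable pd_differentiable_hess_gamma[OF assms]
    by (simp add: pd_sum pd_mult sum.distrib hessQ_low_def hessQ_def hess_metric_eq_pdl[abs_def])
  moreover have "(\<Sum>m\<in>UNIV. pdl [k, i, m] h y * hess_gamma h y m j l)
      = 1/2 * (\<Sum>m\<in>UNIV. \<Sum>n\<in>UNIV. pdl [k, i, m] h y * metric_inv h y m n * pdl [n, j, l] h y)"
    by (simp add: hess_gamma_eq[OF assms] sum_distrib_left mult_ac)
  ultimately show ?thesis by linarith
qed

lemma hessian_symmetric_hessQ_low:
  assumes "y \<in> U"
  shows "hessian_symmetric (hessQ_low h y)"
  unfolding hessian_symmetric_def
proof (intro allI conjI)
  have perm: "pdl xs h y = pdl ys h y" if "mset xs = mset ys" for xs ys
    using pdl_perm[OF assms that] .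
  fix i j k l
  have "pdl [k, i, j, l] h y = pdl [i, k, j, l] h y" "pdl [k, i, m] h y = pdl [i, k, m] h y" for m
    by (rule perm, simp)+
  then show "hessQ_low h y i j k l = hessQ_low h y k j i l"
    unfolding hessQ_low_eq[OF assms] by (simp only:)
  have "pdl [k, i, j, l] h y = pdl [k, i, l, j] h y" "pdl [n, j, l] h y = pdl [n, l, j] h y" for n
    by (rule perm, simp)+
  then show "hessQ_low h y i j k l = hessQ_low h y i l k j"
    unfolding hessQ_low_eq[OF assms] by (simp only:)
  have "pdl [l, j, i, k] h y = pdl [k, i, j, l] h y" "pdl [l, j, m] h y = pdl [m, j, l] h y"
    "pdl [n, i, k] h y = pdl [k, i, n] h y" for m n
    by (rule perm, simp)+
  then have "(\<Sum>m\<in>UNIV. \<Sum>n\<in>UNIV. pdl [l, j, m] h y * metric_inv h y m n * pdl [n, i, k] h y)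
      = (\<Sum>m\<in>UNIV. \<Sum>n\<in>UNIV. pdl [k, i, n] h y * metric_inv h y n m * pdl [m, j, l] h y)"
    using metric_inv_sym[OF assms] by (simp add: mult_ac)
  also have "\<dots> = (\<Sum>m\<in>UNIV. \<Sum>n\<in>UNIV. pdl [k, i, m] h y * metric_inv h y m n * pdl [n, j, l] h y)"
    by (rule sum.swap)
  finally show "hessQ_low h y i j k l = hessQ_low h y j i l k"
    unfolding hessQ_low_eq[OF assms] \<open>pdl [l, j, i, k] h y = pdl [k, i, j, l] h y\<close> by simp
qed

lemma hess_sectional_eq:
  assumes "y \<in> U"
  shows "hess_sectional h y \<xi> = tensor_pairing (hessQ_low h y) \<xi> \<xi> / gram_inner (hess_metric h y) \<xi> \<xi>"
proof -
  have "hatQ h y \<xi> = (\<lambda>i k. \<Sum>j\<in>UNIV. \<Sum>l\<in>UNIV. (\<Sum>m\<in>UNIV. metric_inv h y k m * hessQ h y i j m l) * \<xi> j l)"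
    by (simp add: fun_eq_iff hatQ_def hessQ_mixed_def)
  moreover have "hessQ_low h y = (\<lambda>i j k l. \<Sum>m\<in>UNIV. hess_metric h y i m * hessQ h y m j k l)"
    by (simp add: fun_eq_iff hessQ_low_def)
  moreover have "tens_inner h y = gram_inner (hess_metric h y)"
    by (simp add: fun_eq_iff tens_inner_def gram_inner_def)
  ultimately show ?thesis
    unfolding hess_sectional_def
    using gram_inner_raise_eq_tensor_pairing[OF hess_metric_metric_inv[OF assms] hess_metric_sym[OF assms]]
    by simp
qed

lemma hess_sectional_eq_iff:
  assumes "y \<in> U" "sym2 \<xi>" "\<xi> \<noteq> (\<lambda>_ _. 0)"
  shows "hess_sectional h y \<xi> = c \<longleftrightarrow>
    tensor_pairing (hessQ_low h y) \<xi> \<xi> = tensor_pairing (const_hessian_tensor c (hess_metric h y)) \<xi> \<xi>"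
proof -
  have "gram_inner (hess_metric h y) \<xi> \<xi> > 0"
    using gram_inner_pos hess_metric_sym quad_form_hess_metric_pos assms(1,3) by blast
  then show ?thesis
    unfolding hess_sectional_eq[OF assms(1)]
      tensor_pairing_const_hessian_tensor[OF hess_metric_sym[OF assms(1)] assms(2)]
    by (simp add: field_simps)
qed

lemma constant_hess_sectional_iff:
  assumes "y \<in> U"
  shows "(\<forall>\<xi>. sym2 \<xi> \<and> \<xi> \<noteq> (\<lambda>_ _. 0) \<longrightarrow> hess_sectional h y \<xi> = c)
    \<longleftrightarrow> hessQ_low h y = const_hessian_tensor c (hess_metric h y)"
proof -
  have "(\<forall>\<xi>. sym2 \<xi> \<and> \<xi> \<noteq> (\<lambda>_ _. 0) \<longrightarrow> hess_sectional h y \<xi> = c)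
      \<longleftrightarrow> (\<forall>\<xi>. sym2 \<xi> \<longrightarrow>
        tensor_pairing (hessQ_low h y) \<xi> \<xi> = tensor_pairing (const_hessian_tensor c (hess_metric h y)) \<xi> \<xi>)"
    using hess_sectional_eq_iff[OF assms] by (auto simp: tensor_pairing_def)
  also have "\<dots> \<longleftrightarrow> hessQ_low h y = const_hessian_tensor c (hess_metric h y)"
    using hess_metric_sym[OF assms]
    by (intro hessian_symmetric_eq_iff_tensor_pairing_eq hessian_symmetric_hessQ_low[OF assms]
        hessian_symmetric_const_hessian_tensor)
  finally show ?thesis .
qed

end

theorem proposition10:
  fixes U :: "(real^'q::finite) set" and h :: "real^'q \<Rightarrow> real" and c :: real
  assumes "open U" and "hessian_potential U h"
  shows "(\<forall>y\<in>U. \<forall>\<xi>. sym2 \<xi> \<and> \<xi> \<noteq> (\<lambda>_ _. 0) \<longrightarrow> hess_sectional h y \<xi> = c)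
     \<longleftrightarrow> (\<forall>y\<in>U. \<forall>i j k l. hessQ_low h y i j k l =
            c / 2 * (hess_metric h y i j * hess_metric h y k l
                     + hess_metric h y i l * hess_metric h y j k))"
proof -
  interpret hessian_chart U h
    using assms by unfold_locales
  show ?thesis
    using constant_hess_sectional_iff by (simp add: fun_eq_iff const_hessian_tensor_def)
qed

end
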